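(* Let $n\ge1$ and let $\mathcal B$ be a finite abstract $\mathfrak q_n$-crystal. Then its character $\mathrm{ch}(\mathcal B)=\sum_{b\in\mathcal B}x_1^{\mathrm{wt}(b)_1}\cdots x_n^{\mathrm{wt}(b)_n}$ lies in $\Gamma_n$.
   Context: An abstract $\mathfrak{gl}_n$-crystal is a set $\mathcal B$ with $\mathrm{wt}:\mathcal B\to\mathbb{Z}_{\ge0}^n$ and $e_i,f_i:\mathcal B\to\mathcal B\sqcup\{0\}$ ($i\in[n-1]$) such that $e_i(b)=c\iff f_i(c)=b$, in which case $\mathrm{wt}(c)=\mathrm{wt}(b)+\mathbf e_i-\mathbf e_{i+1}$, and $\varepsilon_i(b)=\max\{k:e_i^k(b)\ne0\}$, $\varphi_i(b)=\max\{k:f_i^k(b)\ne0\}$ are finite with $\varphi_i(b)-\varepsilon_i(b)=\mathrm{wt}(b)_i-\mathrm{wt}(b)_{i+1}$. For $n\ge2$ an abstract $\mathfrak q_n$-crystal is an abstract $\mathfrak{gl}_n$-crystal with maps $e_{\bar1},f_{\bar1}:\mathcal B\to\mathcal B\sqcup\{0\}$ such that: $e_{\bar1}(b)=c\iff f_{\bar1}(c)=b$, in which case $\mathrm{wt}(b)=\mathrm{wt}(c)+\mathbf e_2-\mathbf e_1$ and $\varepsilon_i(b)=\varepsilon_i(c)$, $\varphi_i(b)=\varphi_i(c)$ for $3\le i\le n-1$; $e_{\bar1},f_{\bar1}$ commute with $e_i,f_i$ for $3\le i\le n-1$ (all operators send $0$ to $0$); and, with $\varepsilon_{\bar1}(b)=\max\{k:e_{\bar1}^k(b)\ne0\}$,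 $\varphi_{\bar1}(b)=\max\{k:f_{\bar1}^k(b)\neq0\}$, one has $\varepsilon_{\bar1}(b)+\varphi_{\bar1}(b)\le1$ with equality if $\mathrm{wt}(b)_1\ne0$ or $\mathrm{wt}(b)_2\ne0$. An abstract $\mathfrak q_1$-crystal is any set with a weight map to $\mathbb{Z}_{\ge0}$. $\Lambda_n$ is the ring of symmetric polynomials in $\mathbb{Z}[x_1,\dots,x_n]$; for $n\ge2$, $\Gamma_n$ is the subring of $f\in\Lambda_n$ with $f(x_1,-x_1,x_3,\dots,x_n)\in\mathbb{Z}[x_3,\dots,x_n]$, and $\Gamma_1=\Lambda_1$. *)

theory Defs
  imports "HOL-Combinatorics.Permutations"
begin

text \<open>The value None plays the role of 0.
  Weights are functions nat => nat, of which only the entries 1..n matter.\<close>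

definition opt_iter :: "('b \<Rightarrow> 'b option) \<Rightarrow> nat \<Rightarrow> 'b \<Rightarrow> 'b option" where
  "opt_iter g k b = ((\<lambda>y. Option.bind y g) ^^ k) (Some b)"

definition str_len :: "('b \<Rightarrow> 'b option) \<Rightarrow> 'b \<Rightarrow> nat" where
  "str_len g b = Max {k. opt_iter g k b \<noteq> None}"

definition str_finite :: "('b \<Rightarrow> 'b option) \<Rightarrow> 'b \<Rightarrow> bool" where
  "str_finite g b \<longleftrightarrow> finite {k. opt_iter g k b \<noteq> None}"

definition maps_into :: "'b set \<Rightarrow> ('b \<Rightarrow> 'b option) \<Rightarrow> bool" where
  "maps_into B g \<longleftrightarrow> (\<forall>b\<in>B. \<forall>c. g b = Some c \<longrightarrow> c \<in> B)"

definition gl_crystal ::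
  "nat \<Rightarrow> 'b set \<Rightarrow> ('b \<Rightarrow> nat \<Rightarrow> nat) \<Rightarrow> (nat \<Rightarrow> 'b \<Rightarrow> 'b option) \<Rightarrow> (nat \<Rightarrow> 'b \<Rightarrow> 'b option) \<Rightarrow> bool"
  where
  "gl_crystal n B wt e f \<longleftrightarrow>
    (\<forall>i\<in>{1..<n}.
       maps_into B (e i) \<and> maps_into B (f i) \<and>
       (\<forall>b\<in>B. \<forall>c\<in>B. e i b = Some c \<longleftrightarrow> f i c = Some b) \<and>
       (\<forall>b\<in>B. \<forall>c\<in>B. e i b = Some c \<longrightarrow>
          (\<forall>j\<in>{1..n}. int (wt c j) = int (wt b j) + (if j = i then 1 else 0)
                                                 - (if j = i + 1 then 1 else 0))) \<and>
       (\<forall>b\<in>B. str_finite (e i) b \<and> str_finite (f i) b \<and>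
          int (str_len (f i) b) - int (str_len (e i) b) = int (wt b i) - int (wt b (i + 1))))"

definition q_crystal ::
  "nat \<Rightarrow> 'b set \<Rightarrow> ('b \<Rightarrow> nat \<Rightarrow> nat) \<Rightarrow> (nat \<Rightarrow> 'b \<Rightarrow> 'b option) \<Rightarrow> (nat \<Rightarrow> 'b \<Rightarrow> 'b option)
     \<Rightarrow> ('b \<Rightarrow> 'b option) \<Rightarrow> ('b \<Rightarrow> 'b option) \<Rightarrow> bool"
  where
  "q_crystal n B wt e f eb fb \<longleftrightarrow>
    (n \<ge> 2 \<longrightarrow>
      gl_crystal n B wt e f \<and>
      maps_into B eb \<and> maps_into B fb \<and>
      (\<forall>b\<in>B. \<forall>c\<in>B. eb b = Some c \<longleftrightarrow> fb c = Some b) \<and>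
      (\<forall>b\<in>B. \<forall>c\<in>B. eb b = Some c \<longrightarrow>
          (\<forall>j\<in>{1..n}. int (wt b j) = int (wt c j) + (if j = 2 then 1 else 0)
                                                 - (if j = 1 then 1 else 0)) \<and>
          (\<forall>i\<in>{3..<n}. str_len (e i) b = str_len (e i) c \<and> str_len (f i) b = str_len (f i) c)) \<and>
      (\<forall>i\<in>{3..<n}. \<forall>b\<in>B.
          Option.bind (eb b) (e i) = Option.bind (e i b) eb \<and>
          Option.bind (eb b) (f i) = Option.bind (f i b) eb \<and>
          Option.bind (fb b) (e i) = Option.bind (e i b) fb \<and>
          Option.bind (fb b) (f i) = Option.bind (f i b) fb) \<and>
      (\<forall>b\<in>B. str_finite eb b \<and> str_finite fb b \<and>
          str_len eb b + str_len fb b \<le> 1 \<and>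
          ((wt b 1 \<noteq> 0 \<or> wt b 2 \<noteq> 0) \<longrightarrow> str_len eb b + str_len fb b = 1)))"

definition character :: "nat \<Rightarrow> 'b set \<Rightarrow> ('b \<Rightarrow> nat \<Rightarrow> nat) \<Rightarrow> (nat \<Rightarrow> int) \<Rightarrow> int" where
  "character n B wt x = (\<Sum>b\<in>B. \<Prod>i=1..n. x i ^ wt b i)"

text \<open>Polynomial functions Z^n -> Z (over the infinite domain Z these determine
  the polynomial), symmetric in x_1..x_n.\<close>
definition in_Lambda :: "nat \<Rightarrow> ((nat \<Rightarrow> int) \<Rightarrow> int) \<Rightarrow> bool" where
  "in_Lambda n F \<longleftrightarrow> (\<forall>x \<sigma>. \<sigma> permutes {1..n} \<longrightarrow> F (x \<circ> \<sigma>) = F x)"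

definition in_Gamma :: "nat \<Rightarrow> ((nat \<Rightarrow> int) \<Rightarrow> int) \<Rightarrow> bool" where
  "in_Gamma n F \<longleftrightarrow> in_Lambda n F \<and>
     (n \<ge> 2 \<longrightarrow> (\<forall>x t. F (x(1 := t, 2 := -t)) = F (x(1 := 0, 2 := 0))))"

end

theory Submission
  imports Defs
begin

(* For each i, reversing every i-string (b goes to f_i^k b if k = wt(b)_i - wt(b)_(i+1) >= 0,
   to e_i^(-k) b otherwise) is an involution of B that swaps the weight entries i and i+1, so the
   character is invariant under adjacent transpositions and hence symmetric.
   The odd operators pair every b with wt(b)_1 or wt(b)_2 nonzero with a partner whose weight
   differs by +-(e_1 - e_2). At x_2 = -x_1 the monomials of the two partners cancel, at
   x_1 = x_2 = 0 both vanish, and the elements with wt(b)_1 = wt(b)_2 = 0 contribute the same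
   at both points. *)

lemma opt_iter_0 [simp]: "opt_iter g 0 b = Some b"
  by (simp add: opt_iter_def)

lemma opt_iter_Suc: "opt_iter g (Suc k) b = Option.bind (opt_iter g k b) g"
  by (simp add: opt_iter_def)

lemma opt_iter_Suc_left: "opt_iter g (Suc k) b = Option.bind (g b) (opt_iter g k)"
proof -
  have from_None: "((\<lambda>y. Option.bind y g) ^^ k) None = None"
    by (induction k) auto
  have "opt_iter g (Suc k) b = ((\<lambda>y. Option.bind y g) ^^ k) (g b)"
    unfolding opt_iter_def funpow_Suc_right by simp
  then show ?thesis
    by (cases "g b") (auto simp: from_None opt_iter_def)
qed

lemma opt_iter_1 [simp]: "opt_iter g (Suc 0) b = g b"
  by (simp add: opt_iter_Suc)

lemma opt_iter_defined_mono: "opt_iter g k b \<noteq> None \<Longrightarrow> j \<le> k \<Longrightarrow> opt_iter g j b \<noteq> None"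
proof (induction k)
  case (Suc k)
  have "opt_iter g k b \<noteq> None"
    using Suc.prems(1) by (cases "opt_iter g k b") (auto simp: opt_iter_Suc)
  then show ?case
    using Suc by (auto simp: le_Suc_eq)
qed simp

lemma opt_iter_defined_iff:
  assumes "str_finite g b"
  shows "opt_iter g k b \<noteq> None \<longleftrightarrow> k \<le> str_len g b"
proof
  show "opt_iter g k b \<noteq> None \<Longrightarrow> k \<le> str_len g b"
    using assms unfolding str_len_def str_finite_def by (intro Max_ge) auto
next
  have "0 \<in> {k. opt_iter g k b \<noteq> None}"
    by simp
  then have "opt_iter g (str_len g b) b \<noteq> None"
    using assms Max_in[of "{k. opt_iter g k b \<noteq> None}"]
    unfolding str_len_def str_finite_def by blast
  then show "k \<le> str_len g b \<Longrightarrow> opt_iter g k b \<noteq> None"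
    by (rule opt_iter_defined_mono)
qed

lemma str_len_eq_0_iff: "str_finite g b \<Longrightarrow> str_len g b = 0 \<longleftrightarrow> g b = None"
  using opt_iter_defined_iff[of g b 1] by auto

lemma opt_iter_closed:
  assumes "maps_into B g" and "b \<in> B"
  shows "opt_iter g k b = Some c \<Longrightarrow> c \<in> B"
proof (induction k arbitrary: c)
  case (Suc k)
  then obtain d where "opt_iter g k b = Some d" "g d = Some c"
    by (auto simp: opt_iter_Suc bind_eq_Some_conv)
  then show ?case
    using Suc.IH assms(1) unfolding maps_into_def by blast
qed (use assms(2) in simp)

lemma opt_iter_reverse:
  assumes "maps_into B g" and "\<forall>b\<in>B. \<forall>c\<in>B. g b = Some c \<longrightarrow> h c = Some b"
    and "b \<in> B" and "opt_iter g k b = Some c"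
  shows "opt_iter h k c = Some b"
  using assms(4)
proof (induction k arbitrary: c)
  case (Suc k)
  then obtain d where d: "opt_iter g k b = Some d" "g d = Some c"
    by (auto simp: opt_iter_Suc bind_eq_Some_conv)
  have "d \<in> B"
    using opt_iter_closed[OF assms(1,3) d(1)] .
  with assms(1) d(2) have "c \<in> B"
    unfolding maps_into_def by blast
  with \<open>d \<in> B\<close> have "h c = Some d"
    using assms(2) d(2) by blast
  then show ?case
    using Suc.IH[OF d(1)] by (simp add: opt_iter_Suc_left)
qed simp

lemma opt_iter_shift:
  fixes W :: "'b \<Rightarrow> int"
  assumes "maps_into B g" and "\<forall>b\<in>B. \<forall>c. g b = Some c \<longrightarrow> W c = W b + \<delta>"
    and "b \<in> B" and "opt_iter g k b = Some c"
  shows "W c = W b + int k * \<delta>"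
  using assms(4)
proof (induction k arbitrary: c)
  case (Suc k)
  then obtain d where d: "opt_iter g k b = Some d" "g d = Some c"
    by (auto simp: opt_iter_Suc bind_eq_Some_conv)
  have "d \<in> B"
    using opt_iter_closed[OF assms(1,3) d(1)] .
  then show ?case
    using Suc.IH[OF d(1)] assms(2) d(2) by (simp add: algebra_simps)
qed simp

lemma string_reflection:
  fixes wt :: "'b \<Rightarrow> nat \<Rightarrow> nat"
  assumes maps: "maps_into B g"
    and reverse: "\<forall>b\<in>B. \<forall>c\<in>B. g b = Some c \<longrightarrow> h c = Some b"
    and shift: "\<forall>b\<in>B. \<forall>c. g b = Some c \<longrightarrow>
       (\<forall>j\<in>J. int (wt c j) = int (wt b j) - (if j = p then 1 else 0) + (if j = q then 1 else 0))"
    and b: "b \<in> B" "str_finite g b" "wt b q \<le> wt b p" "wt b p - wt b q \<le> str_len g b"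
  obtains c where "opt_iter g (wt b p - wt b q) b = Some c" "c \<in> B"
    "opt_iter h (wt b p - wt b q) c = Some b" "\<forall>j\<in>J. wt c j = wt b (transpose p q j)"
proof -
  define k where "k = wt b p - wt b q"
  obtain c where c: "opt_iter g k b = Some c"
    using opt_iter_defined_iff[OF b(2), of k] b(4) unfolding k_def by auto
  have shifted: "int (wt c j) = int (wt b j) + int k * ((if j = q then 1 else 0) - (if j = p then 1 else 0))"
    if "j \<in> J" for j
    by (rule opt_iter_shift[OF maps _ b(1) c]) (use shift that in auto)
  have "wt c j = wt b (transpose p q j)" if "j \<in> J" for j
    using shifted[OF that] b(3) unfolding k_def by (cases "j = p"; cases "j = q") auto
  moreover have "c \<in> B" "opt_iter h k c = Some b"
    using opt_iter_closed[OF maps b(1) c] opt_iter_reverse[OF maps reverse b(1) c] by auto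
  ultimately show thesis
    using that c unfolding k_def by blast
qed

lemma gl_crystal_strings:
  assumes gl: "gl_crystal n B wt e f" and i: "i \<in> {1..<n}"
  shows gl_crystal_maps: "maps_into B (e i)" "maps_into B (f i)"
    and gl_crystal_reverse: "\<forall>b\<in>B. \<forall>c\<in>B. e i b = Some c \<longrightarrow> f i c = Some b"
      "\<forall>b\<in>B. \<forall>c\<in>B. f i b = Some c \<longrightarrow> e i c = Some b"
    and gl_crystal_shift_e: "\<forall>b\<in>B. \<forall>c. e i b = Some c \<longrightarrow>
      (\<forall>j\<in>{1..n}. int (wt c j) = int (wt b j) - (if j = Suc i then 1 else 0) + (if j = i then 1 else 0))"
    and gl_crystal_shift_f: "\<forall>b\<in>B. \<forall>c. f i b = Some c \<longrightarrow>
      (\<forall>j\<in>{1..n}. int (wt c j) = int (wt b j) - (if j = i then 1 else 0) + (if j = Suc i then 1 else 0))"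
    and gl_crystal_str_len: "\<forall>b\<in>B. str_finite (e i) b \<and> str_finite (f i) b \<and>
      int (str_len (f i) b) - int (str_len (e i) b) = int (wt b i) - int (wt b (Suc i))"
proof -
  have maps: "maps_into B (e i)" "maps_into B (f i)"
    and e_f: "\<forall>b\<in>B. \<forall>c\<in>B. e i b = Some c \<longleftrightarrow> f i c = Some b"
    and wt_e: "\<forall>b\<in>B. \<forall>c\<in>B. e i b = Some c \<longrightarrow>
       (\<forall>j\<in>{1..n}. int (wt c j) = int (wt b j) + (if j = i then 1 else 0) - (if j = Suc i then 1 else 0))"
    and "\<forall>b\<in>B. str_finite (e i) b \<and> str_finite (f i) b \<and>
       int (str_len (f i) b) - int (str_len (e i) b) = int (wt b i) - int (wt b (Suc i))"
    using bspec[OF gl[unfolded gl_crystal_def] i] unfolding Suc_eq_plus1 by blast+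
  then show "maps_into B (e i)" "maps_into B (f i)"
    "\<forall>b\<in>B. str_finite (e i) b \<and> str_finite (f i) b \<and>
       int (str_len (f i) b) - int (str_len (e i) b) = int (wt b i) - int (wt b (Suc i))"
    by blast+
  show "\<forall>b\<in>B. \<forall>c\<in>B. e i b = Some c \<longrightarrow> f i c = Some b"
    "\<forall>b\<in>B. \<forall>c\<in>B. f i b = Some c \<longrightarrow> e i c = Some b"
    using e_f by auto
  show "\<forall>b\<in>B. \<forall>c. e i b = Some c \<longrightarrow>
      (\<forall>j\<in>{1..n}. int (wt c j) = int (wt b j) - (if j = Suc i then 1 else 0) + (if j = i then 1 else 0))"
  proof (intro ballI allI impI)
    fix b c j
    assume "b \<in> B" "e i b = Some c" "j \<in> {1..n}"
    moreover from this have "c \<in> B"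
      using maps(1) unfolding maps_into_def by blast
    ultimately show "int (wt c j) = int (wt b j) - (if j = Suc i then 1 else 0) + (if j = i then 1 else 0)"
      using wt_e[rule_format, of b c j] by linarith
  qed
  show "\<forall>b\<in>B. \<forall>c. f i b = Some c \<longrightarrow>
      (\<forall>j\<in>{1..n}. int (wt c j) = int (wt b j) - (if j = i then 1 else 0) + (if j = Suc i then 1 else 0))"
  proof (intro ballI allI impI)
    fix b c j
    assume "b \<in> B" "f i b = Some c" "j \<in> {1..n}"
    moreover from this have "c \<in> B"
      using maps(2) unfolding maps_into_def by blast
    moreover from calculation have "e i c = Some b"
      using e_f by blast
    ultimately show "int (wt c j) = int (wt b j) - (if j = i then 1 else 0) + (if j = Suc i then 1 else 0)"
      using wt_e[rule_format, of c b j] by linarith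
  qed
qed

lemma gl_crystal_reflection:
  assumes gl: "gl_crystal n B wt e f" and i: "i \<in> {1..<n}"
  obtains \<sigma> where "\<forall>b\<in>B. \<sigma> b \<in> B \<and> \<sigma> (\<sigma> b) = b \<and>
    (\<forall>j\<in>{1..n}. wt (\<sigma> b) j = wt b (transpose i (Suc i) j))"
proof -
  note maps = gl_crystal_maps[OF gl i]
    and reverse = gl_crystal_reverse[OF gl i]
    and shift_e = gl_crystal_shift_e[OF gl i]
    and shift_f = gl_crystal_shift_f[OF gl i]
    and len = gl_crystal_str_len[OF gl i]
  define \<sigma> where "\<sigma> b = (if wt b (Suc i) \<le> wt b i
      then the (opt_iter (f i) (wt b i - wt b (Suc i)) b)
      else the (opt_iter (e i) (wt b (Suc i) - wt b i) b))" for b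
  have \<sigma>: "\<sigma> b \<in> B \<and> \<sigma> (\<sigma> b) = b \<and> (\<forall>j\<in>{1..n}. wt (\<sigma> b) j = wt b (transpose i (Suc i) j))"
    if b: "b \<in> B" for b
  proof -
    have len_b: "str_finite (e i) b" "str_finite (f i) b"
      "int (str_len (f i) b) - int (str_len (e i) b) = int (wt b i) - int (wt b (Suc i))"
      using len b by blast+
    show ?thesis
    proof (cases "wt b (Suc i) \<le> wt b i")
      case True
      then have "wt b i - wt b (Suc i) \<le> str_len (f i) b"
        using len_b(3) by linarith
      then obtain c where c: "opt_iter (f i) (wt b i - wt b (Suc i)) b = Some c" "c \<in> B"
        "opt_iter (e i) (wt b i - wt b (Suc i)) c = Some b"
        and wt_c: "\<forall>j\<in>{1..n}. wt c j = wt b (transpose i (Suc i) j)"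
        by (rule string_reflection[OF maps(2) reverse(2) shift_f b len_b(2) True])
      have \<sigma>_b: "\<sigma> b = c"
        using c(1) True unfolding \<sigma>_def by simp
      have wt_c_i: "wt c i = wt b (Suc i)" "wt c (Suc i) = wt b i"
        using wt_c i by auto
      have "\<sigma> c = b"
      proof (cases "wt b i = wt b (Suc i)")
        case True
        then show ?thesis
          using c(1) \<sigma>_b by simp
      next
        case False
        then have "\<sigma> c = the (opt_iter (e i) (wt b i - wt b (Suc i)) c)"
          using wt_c_i \<open>wt b (Suc i) \<le> wt b i\<close> unfolding \<sigma>_def by simp
        then show ?thesis
          using c(3) by simp
      qed
      then show ?thesis
        using \<sigma>_b c(2) wt_c by simp
    next
      case False
      then have le: "wt b i \<le> wt b (Suc i)"
        by simp
      have "wt b (Suc i) - wt b i \<le> str_len (e i) b"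
        using len_b(3) False by linarith
      then obtain c where c: "opt_iter (e i) (wt b (Suc i) - wt b i) b = Some c" "c \<in> B"
        "opt_iter (f i) (wt b (Suc i) - wt b i) c = Some b"
        and wt_c: "\<forall>j\<in>{1..n}. wt c j = wt b (transpose (Suc i) i j)"
        by (rule string_reflection[OF maps(1) reverse(1) shift_e b len_b(1) le])
      have \<sigma>_b: "\<sigma> b = c"
        using c(1) False unfolding \<sigma>_def by simp
      have "wt c i = wt b (Suc i)" "wt c (Suc i) = wt b i"
        using wt_c i by auto
      then have "\<sigma> c = the (opt_iter (f i) (wt b (Suc i) - wt b i) c)"
        using False unfolding \<sigma>_def by simp
      then have "\<sigma> c = b"
        using c(3) by simp
      then show ?thesis
        using \<sigma>_b c(2) wt_c by (simp add: transpose_commute)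
    qed
  qed
  then show thesis
    using that by blast
qed

lemma invariant_permutes_if_adjacent_transpose:
  fixes F :: "(nat \<Rightarrow> 'a) \<Rightarrow> 'c"
  assumes adjacent: "\<And>i x. i \<in> {1..<n} \<Longrightarrow> F (x \<circ> transpose i (Suc i)) = F x"
    and p: "p permutes {1..n}"
  shows "F (x \<circ> p) = F x"
proof -
  have adjacent_seq: "F (x \<circ> apply_adj_transps xs) = F x" if "set xs \<subseteq> {1..<n}" for xs x
    using that
  proof (induction xs arbitrary: x)
    case (Cons a xs)
    have "F (x \<circ> apply_adj_transps (a # xs)) = F ((x \<circ> transpose a (Suc a)) \<circ> apply_adj_transps xs)"
      by (simp add: o_assoc)
    also have "\<dots> = F (x \<circ> transpose a (Suc a))"
      using Cons.prems by (intro Cons.IH) simp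
    also have "\<dots> = F x"
      using Cons.prems by (intro adjacent) simp
    finally show ?case .
  qed simp
  have transpose_less: "F (x \<circ> transpose a b) = F x" if "a < b" "a \<in> {1..n}" "b \<in> {1..n}" for a b x
    using adjacent_seq[of "adj_transp_seq a b"] that
    by (auto simp: adj_transp_seq_correct set_adj_transp_seq)
  have transpose: "F (x \<circ> transpose a b) = F x" if "a \<in> {1..n}" "b \<in> {1..n}" for a b x
    using transpose_less[of a b] transpose_less[of b a] that
    by (cases a b rule: linorder_cases) (auto simp: transpose_commute)
  have "\<forall>x. F (x \<circ> p) = F x"
    using p finite_atLeastAtMost
  proof (induction rule: permutes_induct)
    case (swap a b p)
    then show ?case
      by (metis transpose o_assoc)
  qed simp
  then show ?thesis ..
qed

lemma character_comp_permutes: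
  assumes "\<tau> permutes {1..n}" and "bij_betw \<sigma> B B"
    and "\<forall>b\<in>B. \<forall>j\<in>{1..n}. wt b j = wt (\<sigma> b) (\<tau> j)"
  shows "character n B wt (x \<circ> \<tau>) = character n B wt x"
proof -
  have "(\<Prod>j=1..n. x (\<tau> j) ^ wt b j) = (\<Prod>j=1..n. x j ^ wt (\<sigma> b) j)" if "b \<in> B" for b
  proof -
    have "(\<Prod>j=1..n. x (\<tau> j) ^ wt b j) = (\<Prod>j=1..n. x (\<tau> j) ^ wt (\<sigma> b) (\<tau> j))"
      using assms(3) that by simp
    also have "\<dots> = (\<Prod>j=1..n. x j ^ wt (\<sigma> b) j)"
      using prod.reindex_bij_betw[OF permutes_imp_bij[OF assms(1)], of "\<lambda>j. x j ^ wt (\<sigma> b) j"]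
      by simp
    finally show ?thesis .
  qed
  then have "character n B wt (x \<circ> \<tau>) = (\<Sum>b\<in>B. \<Prod>j=1..n. x j ^ wt (\<sigma> b) j)"
    unfolding character_def by simp
  also have "\<dots> = character n B wt x"
    unfolding character_def by (rule sum.reindex_bij_betw[OF assms(2)])
  finally show ?thesis .
qed

lemma gl_crystal_character_symmetric:
  assumes "gl_crystal n B wt e f" and "\<tau> permutes {1..n}"
  shows "character n B wt (x \<circ> \<tau>) = character n B wt x"
proof (rule invariant_permutes_if_adjacent_transpose[OF _ assms(2)])
  fix i and y :: "nat \<Rightarrow> int"
  assume i: "i \<in> {1..<n}"
  then obtain \<sigma> where \<sigma>: "\<forall>b\<in>B. \<sigma> b \<in> B \<and> \<sigma> (\<sigma> b) = b \<and>
      (\<forall>j\<in>{1..n}. wt (\<sigma> b) j = wt b (transpose i (Suc i) j))"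
    using gl_crystal_reflection[OF assms(1)] by blast
  have "transpose i (Suc i) permutes {1..n}"
    using i by (intro permutes_swap_id) auto
  moreover have "bij_betw \<sigma> B B"
    by (rule bij_betw_byWitness[where f' = \<sigma>]) (use \<sigma> in auto)
  moreover have "\<forall>b\<in>B. \<forall>j\<in>{1..n}. wt b j = wt (\<sigma> b) (transpose i (Suc i) j)"
    using \<sigma> i by (auto simp: transpose_def)
  ultimately show "character n B wt (y \<circ> transpose i (Suc i)) = character n B wt y"
    by (rule character_comp_permutes)
qed

lemma prod_split_first_two:
  fixes h :: "nat \<Rightarrow> 'a::comm_monoid_mult"
  assumes "n \<ge> 2"
  shows "prod h {1..n} = h 1 * h 2 * prod h {3..n}"
proof -
  have "{1..n} = insert 1 (insert 2 {3..n})"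
    using assms by auto
  then show ?thesis
    by (simp add: mult.assoc)
qed

(* The parity condition makes x_1^(wt b 1) * x_2^(wt b 2) change sign between b and its partner
   at x_2 = -x_1. *)
definition odd_pairing :: "nat \<Rightarrow> 'b set \<Rightarrow> ('b \<Rightarrow> nat \<Rightarrow> nat) \<Rightarrow> ('b \<Rightarrow> 'b) \<Rightarrow> bool" where
  "odd_pairing n B wt \<iota> \<longleftrightarrow> (\<forall>b\<in>B. wt b 1 \<noteq> 0 \<or> wt b 2 \<noteq> 0 \<longrightarrow>
     \<iota> b \<in> B \<and> \<iota> (\<iota> b) = b \<and> wt (\<iota> b) 1 + wt (\<iota> b) 2 = wt b 1 + wt b 2 \<and>
     odd (wt (\<iota> b) 2 + wt b 2) \<and> (\<forall>j\<in>{3..n}. wt (\<iota> b) j = wt b j))"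

lemma character_cancellation_by_odd_pairing:
  assumes "finite B" and n: "n \<ge> 2"
    and \<iota>: "odd_pairing n B wt \<iota>"
  shows "character n B wt (x(1 := t, 2 := - t)) = character n B wt (x(1 := 0, 2 := 0))"
proof -
  define S where "S = {b\<in>B. wt b 1 \<noteq> 0 \<or> wt b 2 \<noteq> 0}"
  have \<iota>S: "\<iota> b \<in> B \<and> \<iota> (\<iota> b) = b \<and> wt (\<iota> b) 1 + wt (\<iota> b) 2 = wt b 1 + wt b 2 \<and>
      odd (wt (\<iota> b) 2 + wt b 2) \<and> (\<forall>j\<in>{3..n}. wt (\<iota> b) j = wt b j)" if "b \<in> S" for b
    using \<iota> that unfolding odd_pairing_def S_def by blast
  define m where "m y b = (\<Prod>j=1..n. y j ^ wt b j)" for y :: "nat \<Rightarrow> int" and b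
  define rest where "rest b = (\<Prod>j=3..n. x j ^ wt b j)" for b
  have m_split: "m (x(1 := s, 2 := u)) b = s ^ wt b 1 * u ^ wt b 2 * rest b" for s u b
    unfolding m_def rest_def prod_split_first_two[OF n] by (auto intro!: prod.cong)
  have "sum (m (x(1 := t, 2 := - t))) S = 0"
  proof (rule sum_involution_eq_0)
    fix b assume b: "b \<in> S"
    note \<iota>b = \<iota>S[OF b]
    have "rest (\<iota> b) = rest b"
      using \<iota>b unfolding rest_def by (auto intro!: prod.cong)
    moreover have "(-1::int) ^ wt (\<iota> b) 2 = - ((-1) ^ wt b 2)"
      using \<iota>b by (auto simp: minus_one_power_iff)
    moreover have "t ^ a * (- t) ^ c = (-1) ^ c * t ^ (a + c)" for a c
      unfolding power_minus[of t] power_add by (simp add: algebra_simps)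
    ultimately show "m (x(1 := t, 2 := - t)) (\<iota> b) + m (x(1 := t, 2 := - t)) b = 0"
      using \<iota>b unfolding m_split by (simp add: mult.assoc)
    show "\<iota> b \<in> S" "\<iota> (\<iota> b) = b" "\<iota> b \<noteq> b"
      using \<iota>b b unfolding S_def by auto
  qed
  moreover have "sum (m (x(1 := 0, 2 := 0))) S = 0"
    unfolding m_split S_def by (rule sum.neutral) auto
  moreover have "sum (m (x(1 := t, 2 := - t))) (B - S) = sum (m (x(1 := 0, 2 := 0))) (B - S)"
    unfolding m_split S_def by (rule sum.cong) auto
  moreover have "sum g B = sum g (B - S) + sum g S" for g :: "_ \<Rightarrow> int"
    using sum.subset_diff[of S B g] \<open>finite B\<close> unfolding S_def by blast
  moreover have "character n B wt y = sum (m y) B" for y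
    unfolding character_def m_def ..
  ultimately show ?thesis
    by metis
qed

lemma q_crystal_odd_pairing:
  assumes q: "q_crystal n B wt e f eb fb" and n: "n \<ge> 2"
  obtains \<iota> where "odd_pairing n B wt \<iota>"
proof -
  have maps: "maps_into B eb" "maps_into B fb"
    and eb_fb: "\<forall>b\<in>B. \<forall>c\<in>B. eb b = Some c \<longleftrightarrow> fb c = Some b"
    and wt_eb: "\<forall>b\<in>B. \<forall>c\<in>B. eb b = Some c \<longrightarrow>
       (\<forall>j\<in>{1..n}. int (wt b j) = int (wt c j) + (if j = 2 then 1 else 0) - (if j = 1 then 1 else 0))"
    and len: "\<forall>b\<in>B. str_finite eb b \<and> str_finite fb b \<and> str_len eb b + str_len fb b \<le> 1 \<and>
       ((wt b 1 \<noteq> 0 \<or> wt b 2 \<noteq> 0) \<longrightarrow> str_len eb b + str_len fb b = 1)"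
    using q n unfolding q_crystal_def by blast+
  have step: "c \<in> B \<and> fb c = Some b \<and> wt c 1 = Suc (wt b 1) \<and> wt b 2 = Suc (wt c 2) \<and>
      (\<forall>j\<in>{3..n}. wt c j = wt b j)" if "b \<in> B" "eb b = Some c" for b c
  proof -
    have c: "c \<in> B"
      using maps(1) that unfolding maps_into_def by blast
    have shift: "int (wt b j) = int (wt c j) + (if j = 2 then 1 else 0) - (if j = 1 then 1 else 0)"
      if "j \<in> {1..n}" for j
      using wt_eb that \<open>b \<in> B\<close> \<open>eb b = Some c\<close> c by blast
    have "wt c 1 = Suc (wt b 1)" "wt b 2 = Suc (wt c 2)"
      using shift[of 1] shift[of 2] n by auto
    moreover have "wt c j = wt b j" if "j \<in> {3..n}" for j
      using shift[of j] that by simp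
    ultimately show ?thesis
      using eb_fb that c by auto
  qed
  define \<iota> where "\<iota> b = (case fb b of Some c \<Rightarrow> c | None \<Rightarrow> the (eb b))" for b
  have "\<iota> b \<in> B \<and> \<iota> (\<iota> b) = b \<and> wt (\<iota> b) 1 + wt (\<iota> b) 2 = wt b 1 + wt b 2 \<and>
      odd (wt (\<iota> b) 2 + wt b 2) \<and> (\<forall>j\<in>{3..n}. wt (\<iota> b) j = wt b j)"
    if b: "b \<in> B" and nonzero: "wt b 1 \<noteq> 0 \<or> wt b 2 \<noteq> 0" for b
  proof (cases "fb b")
    case None
    have len_b: "str_finite eb b" "str_finite fb b" "str_len eb b + str_len fb b = 1"
      using len b nonzero by blast+
    have "str_len fb b = 0"
      using str_len_eq_0_iff[OF len_b(2)] None by simp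
    then have "eb b \<noteq> None"
      using len_b(3) str_len_eq_0_iff[OF len_b(1)] by simp
    then obtain c where c: "eb b = Some c"
      by blast
    show ?thesis
      using step[OF b c] None c unfolding \<iota>_def by auto
  next
    case (Some c)
    have c: "c \<in> B" "eb c = Some b"
      using maps(2) eb_fb b Some unfolding maps_into_def by blast+
    have len_c: "str_finite eb c" "str_finite fb c" "str_len eb c + str_len fb c \<le> 1"
      using len c(1) by blast+
    have "str_len eb c \<noteq> 0"
      using str_len_eq_0_iff[OF len_c(1)] c(2) by simp
    then have "fb c = None"
      using len_c(3) str_len_eq_0_iff[OF len_c(2)] by simp
    then show ?thesis
      using step[OF c] Some c unfolding \<iota>_def by auto
  qed
  then show thesis
    using that unfolding odd_pairing_def by blast
qed

theorem proposition2p5: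
  fixes n :: nat and B :: "'b set" and wt :: "'b \<Rightarrow> nat \<Rightarrow> nat"
    and e f :: "nat \<Rightarrow> 'b \<Rightarrow> 'b option" and eb fb :: "'b \<Rightarrow> 'b option"
  assumes "n \<ge> 1" and "finite B" and "q_crystal n B wt e f eb fb"
  shows "in_Gamma n (character n B wt)"
  unfolding in_Gamma_def in_Lambda_def
proof (intro conjI allI impI)
  fix x :: "nat \<Rightarrow> int" and \<tau> :: "nat \<Rightarrow> nat"
  assume \<tau>: "\<tau> permutes {1..n}"
  show "character n B wt (x \<circ> \<tau>) = character n B wt x"
  proof (cases "n \<ge> 2")
    case True
    then have "gl_crystal n B wt e f"
      using assms(3) unfolding q_crystal_def by blast
    then show ?thesis
      using \<tau> by (rule gl_crystal_character_symmetric)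
  next
    case False
    then have "n = 1"
      using assms(1) by simp
    then have "\<tau> = id"
      using \<tau> by simp
    then show ?thesis
      by simp
  qed
next
  fix x :: "nat \<Rightarrow> int" and t :: int
  assume n: "n \<ge> 2"
  obtain \<iota> where "odd_pairing n B wt \<iota>"
    using q_crystal_odd_pairing[OF assms(3) n] .
  then show "character n B wt (x(1 := t, 2 := - t)) = character n B wt (x(1 := 0, 2 := 0))"
    by (rule character_cancellation_by_odd_pairing[OF assms(2) n])
qed

end
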